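(* Assume $r<n$. Then for every solution of system (S) with initial condition in $\mathcal{D}^0$, the total mite population $M(t)+N(t)$ tends to $0$ as $t\to+\infty$.
   Context: All parameters $b,\lambda,\gamma,m,\mu,r,n,p,h,\beta,\delta,e$ are positive constants. Here $B,I$ denote healthy and infected bees and $M,N$ healthy and infected mites. The model (S) is $$B'=\frac{bB}{B+I}-\lambda BN-\gamma BI-mB,\qquad I'=\frac{bI}{B+I}+\lambda BN+\gamma BI-(m+\mu)I,$$ $$M'=r(M+N)-nM-\frac{p}{h(B+I)}M(M+N)-M(\beta I+\delta N+eB),$$ $$N'=-nN-\frac{p}{h(B+I)}N(M+N)+\beta MI+\delta MN-eNB,$$ considered on the domain $\mathcal{D}^0=\{(B,I,M,N)\in\mathbb{R}^4_+ : B+I\neq 0\}$, where $\mathbb{R}_+=[0,\infty)$. *)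

theory Defs
  imports "HOL-Analysis.Analysis"
begin

definition D0 :: "real \<Rightarrow> real \<Rightarrow> real \<Rightarrow> real \<Rightarrow> bool" where
  "D0 B I M N \<longleftrightarrow> B \<ge> 0 \<and> I \<ge> 0 \<and> M \<ge> 0 \<and> N \<ge> 0 \<and> B + I \<noteq> 0"

definition solution_S ::
  "real \<Rightarrow> real \<Rightarrow> real \<Rightarrow> real \<Rightarrow> real \<Rightarrow> real \<Rightarrow> real \<Rightarrow> real \<Rightarrow> real \<Rightarrow> real \<Rightarrow> real \<Rightarrow> real \<Rightarrow>
   (real \<Rightarrow> real) \<Rightarrow> (real \<Rightarrow> real) \<Rightarrow> (real \<Rightarrow> real) \<Rightarrow> (real \<Rightarrow> real) \<Rightarrow> bool" where
  "solution_S b lam \<gamma> m \<mu> r n p h \<beta> \<delta> e B I M N \<longleftrightarrow>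
    (\<forall>t\<ge>0. B t + I t \<noteq> 0 \<and>
      (B has_real_derivative
         (b * B t / (B t + I t) - lam * B t * N t - \<gamma> * B t * I t - m * B t)) (at t within {0..}) \<and>
      (I has_real_derivative
         (b * I t / (B t + I t) + lam * B t * N t + \<gamma> * B t * I t - (m + \<mu>) * I t)) (at t within {0..}) \<and>
      (M has_real_derivative
         (r * (M t + N t) - n * M t - p / (h * (B t + I t)) * M t * (M t + N t)
          - M t * (\<beta> * I t + \<delta> * N t + e * B t))) (at t within {0..}) \<and>
      (N has_real_derivative
         (- n * N t - p / (h * (B t + I t)) * N t * (M t + N t)
          + \<beta> * M t * I t + \<delta> * M t * N t - e * N t * B t)) (at t within {0..}))"

end

theory Submission imports Defs begin

text \<open>Each of B and the total mite population V = M + N solves a scalar linear equation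
  x' = g x with continuous coefficient g, so x t = x 0 * exp (\<integral>{0..t} g) keeps the sign of x 0.
  The coefficient for V is r - n - p V / (h (B + I)) - e B \<le> r - n once B, V \<ge> 0; hence
  0 \<le> V t \<le> V 0 * exp ((r - n) t), which tends to 0 when r < n.\<close>

lemma continuous_on_atLeast_if_has_real_derivative:
  fixes f :: "real \<Rightarrow> real"
  assumes "\<And>t. t \<ge> a \<Longrightarrow> (f has_real_derivative f' t) (at t within {a..})"
  shows "continuous_on {a..} f"
  unfolding continuous_on_eq_continuous_within
  using assms DERIV_continuous by fastforce

lemma pos_if_continuous_nonvanishing:
  fixes f :: "real \<Rightarrow> real"
  assumes f: "continuous_on {a..} f" and nz: "\<And>t. t \<ge> a \<Longrightarrow> f t \<noteq> 0"
    and "f a > 0" "t \<ge> a"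
  shows "f t > 0"
proof (rule ccontr)
  assume "\<not> f t > 0"
  moreover have "continuous_on {a..t} f" using f by (rule continuous_on_subset) auto
  ultimately obtain s where "a \<le> s" "s \<le> t" "f s = 0"
    using IVT2'[of f t 0 a] assms(3,4) by auto
  with nz show False by auto
qed

lemma linear_ode_solution_eq:
  fixes x g :: "real \<Rightarrow> real"
  assumes x: "\<And>t. t \<ge> a \<Longrightarrow> (x has_real_derivative g t * x t) (at t within {a..})"
    and g: "continuous_on {a..} g" and "t \<ge> a"
  shows "x t = x a * exp (integral {a..t} g)"
proof -
  define y where "y u = x u * exp (- integral {a..u} g)" for u
  have g': "continuous_on {a..t} g" using g by (rule continuous_on_subset) auto
  have "(y has_real_derivative 0) (at u within {a..t})" if u: "u \<in> {a..t}" for u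
  proof -
    have "(x has_real_derivative g u * x u) (at u within {a..t})"
      using x[of u] u by (auto intro: DERIV_subset)
    moreover have "((\<lambda>u. exp (- integral {a..u} g)) has_real_derivative
        exp (- integral {a..u} g) * - g u) (at u within {a..t})"
      using integral_has_real_derivative[OF g' u] by (auto intro!: derivative_eq_intros)
    ultimately show ?thesis
      unfolding y_def by (rule DERIV_cong[OF DERIV_mult]) (simp add: algebra_simps)
  qed
  then obtain c where "\<forall>u\<in>{a..t}. y u = c"
    using has_field_derivative_zero_constant[of "{a..t}" y] by auto
  hence "y t = y a" using \<open>t \<ge> a\<close> by auto
  thus ?thesis by (simp add: y_def exp_minus field_simps)
qed

lemma linear_ode_nonneg:
  fixes x g :: "real \<Rightarrow> real"
  assumes "\<And>t. t \<ge> a \<Longrightarrow> (x has_real_derivative g t * x t) (at t within {a..})"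
    and "continuous_on {a..} g" "x a \<ge> 0" "t \<ge> a"
  shows "x t \<ge> 0"
  using linear_ode_solution_eq[OF assms(1,2,4)] assms(3) by simp

lemma linear_ode_le_exp:
  fixes x g :: "real \<Rightarrow> real"
  assumes "\<And>t. t \<ge> a \<Longrightarrow> (x has_real_derivative g t * x t) (at t within {a..})"
    and g: "continuous_on {a..} g" and "x a \<ge> 0" "t \<ge> a"
    and g_le: "\<And>u. u \<in> {a..t} \<Longrightarrow> g u \<le> c"
  shows "x t \<le> x a * exp (c * (t - a))"
proof -
  have "continuous_on {a..t} g" using g by (rule continuous_on_subset) auto
  hence "integral {a..t} g \<le> integral {a..t} (\<lambda>_. c)"
    by (intro integral_le integrable_continuous_interval) (auto intro: g_le)
  also have "\<dots> = c * (t - a)" using \<open>t \<ge> a\<close> by simp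
  finally show ?thesis
    using linear_ode_solution_eq[OF assms(1,2,4)] \<open>x a \<ge> 0\<close>
    by (simp add: mult_left_mono)
qed

locale bee_mite_solution =
  fixes b lam \<gamma> m \<mu> r n p h \<beta> \<delta> e :: real
    and B I M N :: "real \<Rightarrow> real"
  assumes solution: "solution_S b lam \<gamma> m \<mu> r n p h \<beta> \<delta> e B I M N"
    and initial: "D0 (B 0) (I 0) (M 0) (N 0)"
    and h_pos: "h > 0" and p_nonneg: "p \<ge> 0" and e_nonneg: "e \<ge> 0"
begin

lemma solution_at:
  assumes "t \<ge> 0"
  shows bees_nonzero: "B t + I t \<noteq> 0"
    and healthy_bees_has_derivative: "(B has_real_derivative
      b * B t / (B t + I t) - lam * B t * N t - \<gamma> * B t * I t - m * B t) (at t within {0..})"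
    and infected_bees_has_derivative: "(I has_real_derivative
      b * I t / (B t + I t) + lam * B t * N t + \<gamma> * B t * I t - (m + \<mu>) * I t)
      (at t within {0..})"
    and healthy_mites_has_derivative: "(M has_real_derivative
      r * (M t + N t) - n * M t - p / (h * (B t + I t)) * M t * (M t + N t)
        - M t * (\<beta> * I t + \<delta> * N t + e * B t)) (at t within {0..})"
    and infected_mites_has_derivative: "(N has_real_derivative
      - n * N t - p / (h * (B t + I t)) * N t * (M t + N t)
        + \<beta> * M t * I t + \<delta> * M t * N t - e * N t * B t) (at t within {0..})"
  using solution[unfolded solution_S_def, rule_format, OF assms] by blast+

lemmas continuous_populations =
  continuous_on_atLeast_if_has_real_derivative[OF healthy_bees_has_derivative]
  continuous_on_atLeast_if_has_real_derivative[OF infected_bees_has_derivative]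
  continuous_on_atLeast_if_has_real_derivative[OF healthy_mites_has_derivative]
  continuous_on_atLeast_if_has_real_derivative[OF infected_mites_has_derivative]

lemma bees_pos:
  assumes "t \<ge> 0"
  shows "B t + I t > 0"
proof (rule pos_if_continuous_nonvanishing[OF _ bees_nonzero _ assms])
  show "continuous_on {0..} (\<lambda>t. B t + I t)"
    using continuous_populations(1,2) by (rule continuous_on_add)
  show "B 0 + I 0 > 0"
    using initial unfolding D0_def by linarith
qed

lemma healthy_bees_nonneg:
  assumes "t \<ge> 0"
  shows "B t \<ge> 0"
proof (rule linear_ode_nonneg[where g = "\<lambda>t. b / (B t + I t) - lam * N t - \<gamma> * I t - m",
      OF _ _ _ assms])
  show "(B has_real_derivative (b / (B t + I t) - lam * N t - \<gamma> * I t - m) * B t)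
      (at t within {0..})" if "t \<ge> 0" for t
  proof -
    have "(b / (B t + I t) - lam * N t - \<gamma> * I t - m) * B t
        = b * B t / (B t + I t) - lam * B t * N t - \<gamma> * B t * I t - m * B t"
      using bees_nonzero[OF that] by (simp add: field_simps)
    with healthy_bees_has_derivative[OF that] show ?thesis by simp
  qed
  show "continuous_on {0..} (\<lambda>t. b / (B t + I t) - lam * N t - \<gamma> * I t - m)"
    using continuous_populations bees_nonzero by (intro continuous_intros) auto
  show "B 0 \<ge> 0"
    using initial unfolding D0_def by simp
qed

definition mite_growth_rate :: "real \<Rightarrow> real" where
  "mite_growth_rate t = r - n - p * (M t + N t) / (h * (B t + I t)) - e * B t"

lemma continuous_mite_growth_rate: "continuous_on {0..} mite_growth_rate"
  unfolding mite_growth_rate_def[abs_def]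
  using continuous_populations bees_pos h_pos
  by (intro continuous_intros) (auto simp: less_imp_neq[symmetric])

lemma mites_has_derivative:
  assumes "t \<ge> 0"
  shows "((\<lambda>t. M t + N t) has_real_derivative mite_growth_rate t * (M t + N t))
    (at t within {0..})"
proof (rule DERIV_cong[OF DERIV_add[OF healthy_mites_has_derivative infected_mites_has_derivative],
      OF assms assms])
  define q where "q = p / (h * (B t + I t))"
  have rate: "mite_growth_rate t = r - n - q * (M t + N t) - e * B t"
    unfolding mite_growth_rate_def q_def by simp
  \<comment> \<open>the transmission terms \<beta> M I and \<delta> M N cancel in the sum\<close>
  show "r * (M t + N t) - n * M t - p / (h * (B t + I t)) * M t * (M t + N t)
        - M t * (\<beta> * I t + \<delta> * N t + e * B t)
      + (- n * N t - p / (h * (B t + I t)) * N t * (M t + N t)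
        + \<beta> * M t * I t + \<delta> * M t * N t - e * N t * B t)
      = mite_growth_rate t * (M t + N t)"
    unfolding rate q_def[symmetric] by algebra
qed

lemma mites_nonneg:
  assumes "t \<ge> 0"
  shows "M t + N t \<ge> 0"
proof (rule linear_ode_nonneg[OF mites_has_derivative continuous_mite_growth_rate _ assms])
  show "M 0 + N 0 \<ge> 0"
    using initial unfolding D0_def by simp
qed

lemma mite_growth_rate_le:
  assumes "t \<ge> 0"
  shows "mite_growth_rate t \<le> r - n"
proof -
  have "p * (M t + N t) / (h * (B t + I t)) \<ge> 0"
    using p_nonneg h_pos mites_nonneg[OF assms] bees_pos[OF assms] by simp
  moreover have "e * B t \<ge> 0"
    using e_nonneg healthy_bees_nonneg[OF assms] by simp
  ultimately show ?thesis
    unfolding mite_growth_rate_def by linarith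
qed

lemma mites_le_exp:
  assumes "t \<ge> 0"
  shows "M t + N t \<le> (M 0 + N 0) * exp ((r - n) * t)"
proof -
  have "M t + N t \<le> (M 0 + N 0) * exp ((r - n) * (t - 0))"
    by (rule linear_ode_le_exp[OF mites_has_derivative continuous_mite_growth_rate
          mites_nonneg[OF order_refl] assms])
      (auto intro: mite_growth_rate_le)
  thus ?thesis by simp
qed

end

theorem mainTheorem2:
  fixes b lam \<gamma> m \<mu> r n p h \<beta> \<delta> e :: real
    and B I M N :: "real \<Rightarrow> real"
  assumes "b > 0" "lam > 0" "\<gamma> > 0" "m > 0" "\<mu> > 0" "r > 0" "n > 0" "p > 0" "h > 0"
      "\<beta> > 0" "\<delta> > 0" "e > 0"
    and "r < n"
    and "solution_S b lam \<gamma> m \<mu> r n p h \<beta> \<delta> e B I M N"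
    and "D0 (B 0) (I 0) (M 0) (N 0)"
  shows "((\<lambda>t. M t + N t) \<longlongrightarrow> 0) at_top"
proof -
  interpret bee_mite_solution b lam \<gamma> m \<mu> r n p h \<beta> \<delta> e B I M N
    using assms(8,9,12,14,15) by unfold_locales simp_all
  have "\<forall>\<^sub>F t in at_top. 0 \<le> M t + N t"
    using eventually_ge_at_top[of 0] by eventually_elim (rule mites_nonneg)
  moreover have "\<forall>\<^sub>F t in at_top. M t + N t \<le> (M 0 + N 0) * exp ((r - n) * t)"
    using eventually_ge_at_top[of 0] by eventually_elim (rule mites_le_exp)
  moreover have "LIM t at_top. (r - n) * t :> at_bot"
    using \<open>r < n\<close>
    by (intro filterlim_tendsto_neg_mult_at_bot[OF tendsto_const _ filterlim_ident]) simp
  hence "((\<lambda>t. exp ((r - n) * t)) \<longlongrightarrow> 0) at_top"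
    by (rule filterlim_compose[OF exp_at_bot])
  hence "((\<lambda>t. (M 0 + N 0) * exp ((r - n) * t)) \<longlongrightarrow> 0) at_top"
    by (rule tendsto_mult_right_zero)
  ultimately show ?thesis
    by (rule tendsto_sandwich[OF _ _ tendsto_const])
qed

end
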